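(* Let $(G,\sigma)$ be a finite connected unbalanced signed graph satisfying $CD^\sigma(0,N)$ for some $N\in(1,\infty]$. Then \[ \mathrm{vol}(G)\leq 8\sqrt{\left(1+\sqrt{(N-1)/N}\right)\ln 2}\cdot d\,\iota^\sigma(G)\sqrt{(D+1)\lceil(D+1)/2\rceil}, \] where $d$ is the maximal vertex degree, $D$ the diameter, $\mathrm{vol}(G)=\sum_{x\in V}d_x$, and $\sqrt{(N-1)/N}:=1$ when $N=\infty$.
   Context: $G=(V,E)$ is a finite simple connected graph with degrees $d_x$; $\sigma:E\to\{\pm1\}$, $\sigma_{xy}=\sigma(\{x,y\})$; $(G,\sigma)$ is balanced if every cycle has sign product $+1$, unbalanced otherwise. The frustration index is $\iota^\sigma(G)=\min_{\tau:V\to\{\pm1\}}\sum_{\{x,y\}\in E}|\tau(x)-\sigma_{xy}\tau(y)|$. Signed Laplacian $\Delta^{\sigma}f(x)=\frac{1}{d_x}\sum_{y\sim x}(\sigma_{xy}f(y)-f(x))$; $\Delta$ is the case $\sigma\equiv+1$. $\Gamma^{\sigma}(f,g)=\frac12\{\Delta(fg)-g\Delta^{\sigma}f-f\Delta^{\sigma}g\}$, $\Gamma_2^{\sigma}(f,g)=\frac12\{\Delta\Gamma^{\sigma}(f,g)-\Gamma^{\sigma}(g,\Delta^{\sigma}f)-\Gamma^{\sigma}(f,\Delta^{\sigma}g)\}$. $CD^{\sigma}(K,N)$ means $\Gamma_2^{\sigma}(f,f)(x)\ge\frac1N(\Delta^\sigma f)^2(x)+K\Gamma^\sigma(f,f)(x)$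 for all $f:V\to\mathbb{R}$, $x\in V$ ($\frac1N=0$ if $N=\infty$). $\lceil\cdot\rceil$ is the ceiling. *)

theory Defs
  imports "HOL-Analysis.Analysis"
begin

definition signed_graph :: "'a set \<Rightarrow> ('a \<Rightarrow> 'a \<Rightarrow> bool) \<Rightarrow> ('a \<Rightarrow> 'a \<Rightarrow> real) \<Rightarrow> bool" where
  "signed_graph V adj \<sigma> \<longleftrightarrow> finite V \<and> V \<noteq> {} \<and>
     (\<forall>x y. adj x y \<longrightarrow> x \<in> V \<and> y \<in> V) \<and>
     (\<forall>x y. adj x y \<longrightarrow> adj y x) \<and> (\<forall>x. \<not> adj x x) \<and>
     (\<forall>x y. adj x y \<longrightarrow> \<sigma> x y = \<sigma> y x \<and> (\<sigma> x y = 1 \<or> \<sigma> x y = -1))"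

definition connected_graph :: "'a set \<Rightarrow> ('a \<Rightarrow> 'a \<Rightarrow> bool) \<Rightarrow> bool" where
  "connected_graph V adj \<longleftrightarrow> (\<forall>x\<in>V. \<forall>y\<in>V. adj\<^sup>*\<^sup>* x y)"

definition nbrs :: "'a set \<Rightarrow> ('a \<Rightarrow> 'a \<Rightarrow> bool) \<Rightarrow> 'a \<Rightarrow> 'a set" where
  "nbrs V adj x = {y \<in> V. adj x y}"

definition deg :: "'a set \<Rightarrow> ('a \<Rightarrow> 'a \<Rightarrow> bool) \<Rightarrow> 'a \<Rightarrow> nat" where
  "deg V adj x = card (nbrs V adj x)"

definition vol :: "'a set \<Rightarrow> ('a \<Rightarrow> 'a \<Rightarrow> bool) \<Rightarrow> nat" where
  "vol V adj = (\<Sum>x\<in>V. deg V adj x)"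

definition max_deg :: "'a set \<Rightarrow> ('a \<Rightarrow> 'a \<Rightarrow> bool) \<Rightarrow> nat" where
  "max_deg V adj = Max (deg V adj ` V)"

definition gdist :: "('a \<Rightarrow> 'a \<Rightarrow> bool) \<Rightarrow> 'a \<Rightarrow> 'a \<Rightarrow> nat" where
  "gdist adj x y = (LEAST n. (adj ^^ n) x y)"

definition diam :: "'a set \<Rightarrow> ('a \<Rightarrow> 'a \<Rightarrow> bool) \<Rightarrow> nat" where
  "diam V adj = Max {gdist adj x y | x y. x \<in> V \<and> y \<in> V}"

definition is_cycle :: "'a set \<Rightarrow> ('a \<Rightarrow> 'a \<Rightarrow> bool) \<Rightarrow> 'a list \<Rightarrow> bool" where
  "is_cycle V adj c \<longleftrightarrow> length c \<ge> 3 \<and> distinct c \<and> set c \<subseteq> V \<and>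
     (\<forall>i < length c. adj (c ! i) (c ! ((i + 1) mod length c)))"

definition cycle_sign :: "('a \<Rightarrow> 'a \<Rightarrow> real) \<Rightarrow> 'a list \<Rightarrow> real" where
  "cycle_sign \<sigma> c = (\<Prod>i < length c. \<sigma> (c ! i) (c ! ((i + 1) mod length c)))"

definition balanced :: "'a set \<Rightarrow> ('a \<Rightarrow> 'a \<Rightarrow> bool) \<Rightarrow> ('a \<Rightarrow> 'a \<Rightarrow> real) \<Rightarrow> bool" where
  "balanced V adj \<sigma> \<longleftrightarrow> (\<forall>c. is_cycle V adj c \<longrightarrow> cycle_sign \<sigma> c = 1)"

(* frustration index: minimum over switching functions tau : V -> {+1,-1} of
   sum over (unordered) edges {x,y} of |tau x - sigma_xy tau y|;
   the sum over unordered edges is written as half the sum over ordered adjacent pairs *)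
definition frustration :: "'a set \<Rightarrow> ('a \<Rightarrow> 'a \<Rightarrow> bool) \<Rightarrow> ('a \<Rightarrow> 'a \<Rightarrow> real) \<Rightarrow> real" where
  "frustration V adj \<sigma> = Min ((\<lambda>\<tau>. (\<Sum>x\<in>V. \<Sum>y\<in>nbrs V adj x. \<bar>\<tau> x - \<sigma> x y * \<tau> y\<bar>) / 2)
       ` (V \<rightarrow>\<^sub>E {-1, 1}))"

definition slap :: "'a set \<Rightarrow> ('a \<Rightarrow> 'a \<Rightarrow> bool) \<Rightarrow> ('a \<Rightarrow> 'a \<Rightarrow> real) \<Rightarrow> ('a \<Rightarrow> real) \<Rightarrow> 'a \<Rightarrow> real" where
  "slap V adj \<sigma> f x = (1 / real (deg V adj x)) * (\<Sum>y\<in>nbrs V adj x. \<sigma> x y * f y - f x)"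

definition lap :: "'a set \<Rightarrow> ('a \<Rightarrow> 'a \<Rightarrow> bool) \<Rightarrow> ('a \<Rightarrow> real) \<Rightarrow> 'a \<Rightarrow> real" where
  "lap V adj f x = slap V adj (\<lambda>_ _. 1) f x"

definition sGamma :: "'a set \<Rightarrow> ('a \<Rightarrow> 'a \<Rightarrow> bool) \<Rightarrow> ('a \<Rightarrow> 'a \<Rightarrow> real) \<Rightarrow> ('a \<Rightarrow> real) \<Rightarrow> ('a \<Rightarrow> real) \<Rightarrow> 'a \<Rightarrow> real" where
  "sGamma V adj \<sigma> f g x = (1/2) * (lap V adj (\<lambda>z. f z * g z) x
      - g x * slap V adj \<sigma> f x - f x * slap V adj \<sigma> g x)"

definition sGamma2 :: "'a set \<Rightarrow> ('a \<Rightarrow> 'a \<Rightarrow> bool) \<Rightarrow> ('a \<Rightarrow> 'a \<Rightarrow> real) \<Rightarrow> ('a \<Rightarrow> real) \<Rightarrow> ('a \<Rightarrow> real) \<Rightarrow> 'a \<Rightarrow> real" where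
  "sGamma2 V adj \<sigma> f g x = (1/2) * (lap V adj (sGamma V adj \<sigma> f g) x
      - sGamma V adj \<sigma> g (slap V adj \<sigma> f) x - sGamma V adj \<sigma> f (slap V adj \<sigma> g) x)"

definition invN :: "ereal \<Rightarrow> real" where
  "invN N = (if N = \<infinity> then 0 else 1 / real_of_ereal N)"

definition CD :: "'a set \<Rightarrow> ('a \<Rightarrow> 'a \<Rightarrow> bool) \<Rightarrow> ('a \<Rightarrow> 'a \<Rightarrow> real) \<Rightarrow> real \<Rightarrow> ereal \<Rightarrow> bool" where
  "CD V adj \<sigma> K N \<longleftrightarrow> (\<forall>f :: 'a \<Rightarrow> real. \<forall>x\<in>V.
      sGamma2 V adj \<sigma> f f x \<ge> invN N * (slap V adj \<sigma> f x)\<^sup>2 + K * sGamma V adj \<sigma> f f x)"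

definition sqrtN :: "ereal \<Rightarrow> real" where
  "sqrtN N = (if N = \<infinity> then 1 else sqrt ((real_of_ereal N - 1) / real_of_ereal N))"

end

theory Submission
  imports Defs
begin

(* Let lam be the first eigenvalue of -Delta^sigma, i.e. the minimum of the Rayleigh quotient of
   the Dirichlet form with respect to the degree-weighted inner product.

   Lower bound for lam: for an eigenfunction phi, CD(0,N) and the maximum principle applied to
   Gamma(phi) + (1 + sqrt((N-1)/N)) lam phi^2 give
   Gamma(phi) <= 2 (1 + sqrt((N-1)/N)) lam max phi^2.
   Since the graph is unbalanced, from a maximum point x0 of |phi| there is a walk of length at
   most D + 1 whose sign disagrees with the signs of phi at its ends (otherwise sgn (phi x0 * phi)
   would switch sigma to the all-positive signature). Summing the gradient of phi along this walk
   two edges at a time gives 1 <= 4 (1 + sqrt((N-1)/N)) d lam (D+1) ceil((D+1)/2).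

   Upper bound for vol(G): let tau : V -> {1,-1} attain the frustration index and let P_t be the
   heat semigroup. Under CD(0,infinity) the function (P_t tau)^2 + 2 t Gamma(P_t tau) is a
   subsolution of the heat equation, hence Gamma(P_t tau) <= 1/(2t), and integrating
   d/dt <tau, P_t tau> = <tau, Delta^sigma P_t tau> yields <tau, tau - P_t tau> <= 2 iota sqrt(d t).
   Spectral decay gives <tau, P_t tau> <= exp(-lam t) vol(G); choose t = ln 2 / lam. *)

lemma quadratic_nonneg_imp_linear_zero:
  fixes B C :: real
  assumes "\<And>e. 0 \<le> 2 * e * B + e\<^sup>2 * C"
  shows "B = 0"
proof (rule ccontr)
  assume B: "B \<noteq> 0"
  define a where "a = \<bar>C\<bar> + 1"
  have a: "a > 0" "C - 2 * a < 0" unfolding a_def by auto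
  have "0 \<le> a\<^sup>2 * (2 * (- B / a) * B + (- B / a)\<^sup>2 * C)"
    using assms[of "- B / a"] by simp
  also have "\<dots> = B\<^sup>2 * (C - 2 * a)"
    using a by (simp add: field_simps power2_eq_square)
  also have "\<dots> < 0"
    using B a by (intro mult_pos_neg) auto
  finally show False by simp
qed

lemma sqrtN_facts:
  assumes "N > (1::ereal)"
  shows "invN N \<ge> 0" and "sqrtN N > 0" and "invN N = 1 - (sqrtN N)\<^sup>2"
proof -
  have "invN N \<ge> 0 \<and> sqrtN N > 0 \<and> invN N = 1 - (sqrtN N)\<^sup>2"
  proof (cases N)
    case (real r)
    with assms have "r > 1" by simp
    moreover have "(r - 1) / r = 1 - 1 / r" using \<open>r > 1\<close> by (simp add: field_simps)
    ultimately show ?thesis unfolding invN_def sqrtN_def real by simp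
  qed (use assms in \<open>simp_all add: invN_def sqrtN_def\<close>)
  then show "invN N \<ge> 0" "sqrtN N > 0" "invN N = 1 - (sqrtN N)\<^sup>2" by auto
qed

lemma prod_lessThan_rotate:
  fixes g :: "nat \<Rightarrow> 'b::comm_monoid_mult"
  assumes "0 < L"
  shows "(\<Prod>i<L. g (Suc i mod L)) = (\<Prod>i<L. g i)"
proof -
  obtain m where L: "L = Suc m" using assms gr0_implies_Suc by blast
  have "(\<Prod>i<m. g (Suc i mod Suc m)) = (\<Prod>i<m. g (Suc i))"
    by (intro prod.cong) auto
  then have "(\<Prod>i<Suc m. g (Suc i mod Suc m)) = (\<Prod>i<m. g (Suc i)) * g 0"
    by simp
  also have "\<dots> = (\<Prod>i<Suc m. g i)"
    unfolding prod.lessThan_Suc_shift by (rule mult.commute)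
  finally show ?thesis unfolding L .
qed

lemma sqrt_ln2_div_le:
  fixes k d lam R :: real
  assumes "0 < lam" "0 \<le> k" "0 \<le> d" "0 \<le> R" "1 \<le> 4 * k * d * lam * R"
  shows "sqrt (d * ln 2 / lam) \<le> 2 * d * sqrt (k * ln 2) * sqrt R"
proof (rule real_le_lsqrt)
  have "d * ln 2 / lam = d * ln 2 * (1 / lam)" by simp
  also have "\<dots> \<le> d * ln 2 * (4 * k * d * R)"
    using assms by (intro mult_left_mono) (simp_all add: pos_divide_le_eq algebra_simps)
  also have "\<dots> = (2 * d * sqrt (k * ln 2) * sqrt R)\<^sup>2"
    using assms by (simp add: power_mult_distrib power2_eq_square algebra_simps)
  finally show "d * ln 2 / lam \<le> (2 * d * sqrt (k * ln 2) * sqrt R)\<^sup>2" .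
qed (use assms in simp)

lemma finite_family_attains_sup:
  fixes h :: "'a \<Rightarrow> real \<Rightarrow> real"
  assumes "finite V" "V \<noteq> {}" "compact S" "S \<noteq> {}" "\<And>y. y \<in> V \<Longrightarrow> continuous_on S (h y)"
  obtains ys ts where "ys \<in> V" "ts \<in> S" "\<And>y t. y \<in> V \<Longrightarrow> t \<in> S \<Longrightarrow> h y t \<le> h ys ts"
proof -
  have "\<forall>y\<in>V. \<exists>ty\<in>S. \<forall>t\<in>S. h y t \<le> h y ty"
    using continuous_attains_sup[OF assms(3,4)] assms(5) by blast
  then obtain T where T: "\<And>y. y \<in> V \<Longrightarrow> T y \<in> S \<and> (\<forall>t\<in>S. h y t \<le> h y (T y))"
    by metis
  have "Max ((\<lambda>y. h y (T y)) ` V) \<in> (\<lambda>y. h y (T y)) ` V" using assms(1,2) by simp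
  then obtain ys where ys: "ys \<in> V" "h ys (T ys) = Max ((\<lambda>y. h y (T y)) ` V)" by auto
  have "h y t \<le> h ys (T ys)" if "y \<in> V" "t \<in> S" for y t
    using T[OF that(1)] that assms(1) unfolding ys(2) by (fastforce intro: order_trans)
  with ys(1) T[OF ys(1)] show ?thesis by (intro that) auto
qed

lemma finite_family_max_principle:
  fixes h h' :: "'a \<Rightarrow> real \<Rightarrow> real"
  assumes "finite V" "V \<noteq> {}"
    and deriv: "\<And>x t. x \<in> V \<Longrightarrow> (h x has_real_derivative h' x t) (at t)"
    and decreasing: "\<And>x t. x \<in> V \<Longrightarrow> t > 0 \<Longrightarrow> (\<forall>y\<in>V. h y t \<le> h x t) \<Longrightarrow> h' x t < 0"
    and init: "\<And>x. x \<in> V \<Longrightarrow> h x 0 \<le> B"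
    and "x1 \<in> V" "t1 \<ge> 0"
  shows "h x1 t1 \<le> B"
proof -
  have "continuous_on {0..t1} (h y)" if "y \<in> V" for y
    using deriv[OF that] by (intro continuous_at_imp_continuous_on ballI DERIV_isCont) blast
  then obtain ys ts where ys: "ys \<in> V" and ts: "ts \<in> {0..t1}"
    and max: "\<And>y t. y \<in> V \<Longrightarrow> t \<in> {0..t1} \<Longrightarrow> h y t \<le> h ys ts"
    using finite_family_attains_sup[OF assms(1,2), of "{0..t1}" h] \<open>t1 \<ge> 0\<close> by auto
  have "h ys ts \<le> B"
  proof (cases "ts = 0")
    case False
    then have "ts > 0" using ts by simp
    then have "h' ys ts < 0" using decreasing[OF ys] max ts ys by blast
    then obtain d where d: "d > 0" "\<And>e. 0 < e \<Longrightarrow> e < d \<Longrightarrow> h ys ts < h ys (ts - e)"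
      using DERIV_neg_dec_left[OF deriv[OF ys]] by blast
    define e where "e = min d ts / 2"
    have "0 < e" "e < d" "ts - e \<in> {0..t1}" unfolding e_def using d \<open>ts > 0\<close> ts by auto
    then show ?thesis using d(2) max[OF ys] by fastforce
  qed (use init[OF ys] in simp)
  then show ?thesis using max \<open>x1 \<in> V\<close> \<open>t1 \<ge> 0\<close> by fastforce
qed

section \<open>Signed graphs and the signed Laplacian\<close>

locale sgraph =
  fixes V :: "'a set" and adj :: "'a \<Rightarrow> 'a \<Rightarrow> bool" and \<sigma> :: "'a \<Rightarrow> 'a \<Rightarrow> real"
  assumes signed: "signed_graph V adj \<sigma>"
begin

abbreviation Nb :: "'a \<Rightarrow> 'a set" where "Nb x \<equiv> nbrs V adj x"
abbreviation dg :: "'a \<Rightarrow> real" where "dg x \<equiv> real (deg V adj x)"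

lemma finite_V: "finite V" and V_ne: "V \<noteq> {}"
  using signed unfolding signed_graph_def by auto

lemma adj_in_V: "adj x y \<Longrightarrow> x \<in> V \<and> y \<in> V"
  and adj_sym: "adj x y \<Longrightarrow> adj y x"
  and sigma_sym: "adj x y \<Longrightarrow> \<sigma> x y = \<sigma> y x"
  and sigma_cases: "adj x y \<Longrightarrow> \<sigma> x y = 1 \<or> \<sigma> x y = -1"
  using signed unfolding signed_graph_def by auto

lemma sigma_square: "adj x y \<Longrightarrow> \<sigma> x y * \<sigma> x y = 1"
  and abs_sigma: "adj x y \<Longrightarrow> \<bar>\<sigma> x y\<bar> = 1"
  using sigma_cases by fastforce+

lemma nbrs_iff: "y \<in> Nb x \<longleftrightarrow> adj x y"
  unfolding nbrs_def using adj_in_V by auto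

lemma nbrs_subset: "Nb x \<subseteq> V"
  unfolding nbrs_def by auto

lemma finite_nbrs: "finite (Nb x)"
  using nbrs_subset finite_V finite_subset by blast

lemma deg_le_max_deg: "x \<in> V \<Longrightarrow> dg x \<le> real (max_deg V adj)"
  unfolding max_deg_def using finite_V by auto

lemma ex_max_on_V: fixes K :: "'a \<Rightarrow> real" obtains x0 where "x0 \<in> V" "\<And>x. x \<in> V \<Longrightarrow> K x \<le> K x0"
proof -
  have "Max (K ` V) \<in> K ` V" using finite_V V_ne by simp
  then obtain x0 where "x0 \<in> V" "K x0 = Max (K ` V)" by auto
  then show ?thesis using that finite_V by simp
qed

lemma sum_nbrs_swap: "(\<Sum>x\<in>V. \<Sum>y\<in>Nb x. F x y) = (\<Sum>x\<in>V. \<Sum>y\<in>Nb x. F y x)"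
proof -
  have "(\<Sum>x\<in>V. \<Sum>y\<in>Nb x. F x y) = (\<Sum>x\<in>V. \<Sum>y\<in>{y. y \<in> V \<and> adj x y}. F x y)"
    unfolding nbrs_def by simp
  also have "\<dots> = (\<Sum>y\<in>V. \<Sum>x\<in>{x. x \<in> V \<and> adj x y}. F x y)"
    by (rule sum.swap_restrict[OF finite_V finite_V])
  also have "\<dots> = (\<Sum>x\<in>V. \<Sum>y\<in>Nb x. F y x)"
    unfolding nbrs_def by (intro sum.cong refl) (auto intro: adj_sym)
  finally show ?thesis .
qed

lemma slap_eq: "slap V adj \<sigma> f x = (\<Sum>y\<in>Nb x. \<sigma> x y * f y - f x) / dg x"
  unfolding slap_def by simp

lemma lap_eq: "lap V adj f x = (\<Sum>y\<in>Nb x. f y - f x) / dg x"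
  unfolding lap_def slap_def by simp

lemma slap_outside: "x \<notin> V \<Longrightarrow> slap V adj \<sigma> f x = 0"
proof -
  assume "x \<notin> V"
  then have "Nb x = {}" using adj_in_V unfolding nbrs_def by blast
  then show ?thesis unfolding slap_eq by simp
qed

lemma slap_scale: "slap V adj \<sigma> (\<lambda>y. a * g y) x = a * slap V adj \<sigma> g x"
  unfolding slap_eq by (simp add: sum_distrib_left algebra_simps)

lemma lap_add_scaled: "lap V adj (\<lambda>z. f z + k * g z) x = lap V adj f x + k * lap V adj g x"
proof -
  have "(\<Sum>y\<in>Nb x. f y + k * g y - (f x + k * g x))
      = (\<Sum>y\<in>Nb x. f y - f x) + k * (\<Sum>y\<in>Nb x. g y - g x)"
    by (simp add: sum.distrib sum_distrib_left algebra_simps sum_subtractf)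
  then show ?thesis unfolding lap_eq by (simp add: add_divide_distrib)
qed

lemma lap_nonpos_at_max:
  assumes "x0 \<in> V" "\<And>x. x \<in> V \<Longrightarrow> K x \<le> K x0"
  shows "lap V adj K x0 \<le> 0"
  unfolding lap_eq using assms nbrs_subset by (intro divide_nonpos_nonneg sum_nonpos) auto

lemma abs_slap_le:
  assumes B: "\<And>z. z \<in> V \<Longrightarrow> \<bar>g z\<bar> \<le> B" and x: "x \<in> V"
  shows "\<bar>slap V adj \<sigma> g x\<bar> \<le> 2 * B"
proof -
  have B0: "B \<ge> 0" using B[OF x] by linarith
  have "\<bar>\<Sum>y\<in>Nb x. \<sigma> x y * g y - g x\<bar> \<le> (\<Sum>y\<in>Nb x. \<bar>\<sigma> x y * g y - g x\<bar>)"
    by (rule sum_abs)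
  also have "\<dots> \<le> (\<Sum>y\<in>Nb x. 2 * B)"
  proof (rule sum_mono)
    fix y assume "y \<in> Nb x"
    then have "\<bar>\<sigma> x y * g y\<bar> = \<bar>g y\<bar>" "y \<in> V"
      using abs_sigma nbrs_iff adj_in_V by (auto simp: abs_mult)
    moreover have "\<bar>\<sigma> x y * g y - g x\<bar> \<le> \<bar>\<sigma> x y * g y\<bar> + \<bar>g x\<bar>" by (rule abs_triangle_ineq4)
    ultimately show "\<bar>\<sigma> x y * g y - g x\<bar> \<le> 2 * B" using B[OF x] B[of y] by linarith
  qed
  also have "\<dots> = dg x * (2 * B)" unfolding deg_def by simp
  finally have S: "\<bar>\<Sum>y\<in>Nb x. \<sigma> x y * g y - g x\<bar> \<le> dg x * (2 * B)" .
  show ?thesis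
  proof (cases "dg x = 0")
    case True
    then show ?thesis unfolding slap_eq using B0 by simp
  next
    case False
    then have "\<bar>slap V adj \<sigma> g x\<bar> = \<bar>\<Sum>y\<in>Nb x. \<sigma> x y * g y - g x\<bar> / dg x"
      unfolding slap_eq by simp
    also have "\<dots> \<le> dg x * (2 * B) / dg x" by (rule divide_right_mono[OF S]) simp
    finally show ?thesis using False by simp
  qed
qed

lemma sGamma_eq:
  "sGamma V adj \<sigma> f g x = (\<Sum>y\<in>Nb x. (\<sigma> x y * f y - f x) * (\<sigma> x y * g y - g x)) / (2 * dg x)"
proof -
  have "(\<Sum>y\<in>Nb x. f y * g y - f x * g x) - g x * (\<Sum>y\<in>Nb x. \<sigma> x y * f y - f x)
      - f x * (\<Sum>y\<in>Nb x. \<sigma> x y * g y - g x)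
      = (\<Sum>y\<in>Nb x. f y * g y - f x * g x) - (\<Sum>y\<in>Nb x. g x * (\<sigma> x y * f y - f x))
         - (\<Sum>y\<in>Nb x. f x * (\<sigma> x y * g y - g x))"
    by (simp add: sum_distrib_left)
  also have "\<dots> = (\<Sum>y\<in>Nb x. (f y * g y - f x * g x) - g x * (\<sigma> x y * f y - f x)
                      - f x * (\<sigma> x y * g y - g x))"
    by (simp add: sum_subtractf)
  also have "\<dots> = (\<Sum>y\<in>Nb x. (\<sigma> x y * f y - f x) * (\<sigma> x y * g y - g x))"
  proof (intro sum.cong refl)
    fix y assume "y \<in> Nb x"
    then have s: "\<sigma> x y * \<sigma> x y = 1" using sigma_square nbrs_iff by auto
    have "(\<sigma> x y * f y - f x) * (\<sigma> x y * g y - g x)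
        = (\<sigma> x y * \<sigma> x y) * f y * g y - \<sigma> x y * f y * g x - \<sigma> x y * f x * g y + f x * g x"
      by (simp add: algebra_simps)
    then show "(f y * g y - f x * g x) - g x * (\<sigma> x y * f y - f x) - f x * (\<sigma> x y * g y - g x)
        = (\<sigma> x y * f y - f x) * (\<sigma> x y * g y - g x)"
      using s by (simp add: algebra_simps)
  qed
  finally have sums: "(\<Sum>y\<in>Nb x. f y * g y - f x * g x) - g x * (\<Sum>y\<in>Nb x. \<sigma> x y * f y - f x)
      - f x * (\<Sum>y\<in>Nb x. \<sigma> x y * g y - g x)
      = (\<Sum>y\<in>Nb x. (\<sigma> x y * f y - f x) * (\<sigma> x y * g y - g x))" .
  have "(1/2) * (a / d - b * (c / d) - e * (h / d)) = (a - b * c - e * h) / (2 * d)"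
    for a b c d e h :: real
    by (cases "d = 0") (simp_all add: field_simps)
  from this[of "\<Sum>y\<in>Nb x. f y * g y - f x * g x"] show ?thesis
    unfolding sGamma_def lap_eq slap_eq sums[symmetric] .
qed

lemma sGamma_self: "sGamma V adj \<sigma> f f x = (\<Sum>y\<in>Nb x. (f x - \<sigma> x y * f y)\<^sup>2) / (2 * dg x)"
  unfolding sGamma_eq by (simp add: power2_eq_square algebra_simps)

lemma sGamma_nonneg: "sGamma V adj \<sigma> f f x \<ge> 0"
  unfolding sGamma_self by (intro divide_nonneg_nonneg sum_nonneg) auto

lemma sum_nbrs_sq_eq_sGamma: "(\<Sum>y\<in>Nb x. (f x - \<sigma> x y * f y)\<^sup>2) = 2 * dg x * sGamma V adj \<sigma> f f x"
  unfolding sGamma_self by (cases "Nb x = {}") (auto simp: deg_def card_eq_0_iff finite_nbrs)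

lemma sGamma_scale_right: "sGamma V adj \<sigma> f (\<lambda>z. a * g z) x = a * sGamma V adj \<sigma> f g x"
  unfolding sGamma_eq by (simp add: sum_distrib_left algebra_simps)

lemma lap_square:
  "lap V adj (\<lambda>z. f z * f z) x = 2 * sGamma V adj \<sigma> f f x + 2 * f x * slap V adj \<sigma> f x"
  unfolding sGamma_def by (simp add: field_simps)

lemma lap_sGamma:
  "lap V adj (sGamma V adj \<sigma> f f) x
     = 2 * sGamma2 V adj \<sigma> f f x + 2 * sGamma V adj \<sigma> f (slap V adj \<sigma> f) x"
  unfolding sGamma2_def by (simp add: field_simps)

lemma CD_zero_bound:
  "CD V adj \<sigma> 0 N \<Longrightarrow> x \<in> V \<Longrightarrow> invN N * (slap V adj \<sigma> f x)\<^sup>2 \<le> sGamma2 V adj \<sigma> f f x"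
  unfolding CD_def by simp

lemma CD_zero_infinity:
  assumes "CD V adj \<sigma> 0 N" "invN N \<ge> 0"
  shows "CD V adj \<sigma> 0 \<infinity>"
proof -
  have "0 \<le> sGamma2 V adj \<sigma> f f x" if "x \<in> V" for f x
    using CD_zero_bound[OF assms(1) that, of f]
      mult_nonneg_nonneg[OF assms(2) zero_le_power2, of "slap V adj \<sigma> f x"] by linarith
  then show ?thesis unfolding CD_def invN_def by simp
qed

lemma sGamma2_nonneg: "CD V adj \<sigma> 0 \<infinity> \<Longrightarrow> x \<in> V \<Longrightarrow> sGamma2 V adj \<sigma> f f x \<ge> 0"
  using CD_zero_bound[of \<infinity> x f] by (simp add: invN_def)

section \<open>The weighted inner product and the Dirichlet form\<close>

definition deg_inner :: "('a \<Rightarrow> real) \<Rightarrow> ('a \<Rightarrow> real) \<Rightarrow> real" where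
  "deg_inner f g = (\<Sum>x\<in>V. dg x * f x * g x)"

text \<open>Sums over ordered pairs of neighbours count every edge twice; this is why an eigenvalue
  \<open>lam\<close> of \<open>- slap V adj \<sigma>\<close> appears as \<open>2 * lam\<close> in Rayleigh quotient bounds.\<close>

definition dirichlet :: "('a \<Rightarrow> real) \<Rightarrow> ('a \<Rightarrow> real) \<Rightarrow> real" where
  "dirichlet f g = (\<Sum>x\<in>V. \<Sum>y\<in>Nb x. (f x - \<sigma> x y * f y) * (g x - \<sigma> x y * g y))"

definition edge_variation :: "('a \<Rightarrow> real) \<Rightarrow> real" where
  "edge_variation f = (\<Sum>x\<in>V. \<Sum>y\<in>Nb x. \<bar>f x - \<sigma> x y * f y\<bar>) / 2"

lemma deg_inner_nonneg: "deg_inner f f \<ge> 0"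
  unfolding deg_inner_def by (intro sum_nonneg) (simp add: mult.assoc)

lemma dirichlet_nonneg: "dirichlet f f \<ge> 0"
  unfolding dirichlet_def by (intro sum_nonneg) auto

lemma edge_variation_nonneg: "edge_variation f \<ge> 0"
  unfolding edge_variation_def by (simp add: sum_nonneg)

lemma deg_inner_cong:
  "(\<And>x. x \<in> V \<Longrightarrow> f x = f' x) \<Longrightarrow> (\<And>x. x \<in> V \<Longrightarrow> g x = g' x) \<Longrightarrow> deg_inner f g = deg_inner f' g'"
  unfolding deg_inner_def by (intro sum.cong refl) auto

lemma dirichlet_cong:
  "(\<And>x. x \<in> V \<Longrightarrow> f x = f' x) \<Longrightarrow> (\<And>x. x \<in> V \<Longrightarrow> g x = g' x) \<Longrightarrow> dirichlet f g = dirichlet f' g'"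
  unfolding dirichlet_def using nbrs_subset by (intro sum.cong refl) (auto simp: subset_iff)

lemma deg_inner_add_scaled:
  "deg_inner (\<lambda>x. f x + e * g x) (\<lambda>x. f x + e * g x)
     = deg_inner f f + 2 * e * deg_inner f g + e\<^sup>2 * deg_inner g g"
  unfolding deg_inner_def by (simp add: sum.distrib sum_distrib_left algebra_simps power2_eq_square)

lemma dirichlet_add_scaled:
  "dirichlet (\<lambda>x. f x + e * g x) (\<lambda>x. f x + e * g x)
     = dirichlet f f + 2 * e * dirichlet f g + e\<^sup>2 * dirichlet g g"
proof -
  have "(f x + e * g x - \<sigma> x y * (f y + e * g y)) * (f x + e * g x - \<sigma> x y * (f y + e * g y))
     = (f x - \<sigma> x y * f y) * (f x - \<sigma> x y * f y)
       + 2 * e * ((f x - \<sigma> x y * f y) * (g x - \<sigma> x y * g y))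
       + e\<^sup>2 * ((g x - \<sigma> x y * g y) * (g x - \<sigma> x y * g y))" for x y
    by (simp add: algebra_simps power2_eq_square)
  then show ?thesis unfolding dirichlet_def by (simp add: sum.distrib sum_distrib_left)
qed

lemma deg_inner_scale: "deg_inner (\<lambda>x. a * f x) (\<lambda>x. a * f x) = a\<^sup>2 * deg_inner f f"
  unfolding deg_inner_def by (simp add: sum_distrib_left algebra_simps power2_eq_square)

lemma dirichlet_scale: "dirichlet (\<lambda>x. a * f x) (\<lambda>x. a * f x) = a\<^sup>2 * dirichlet f f"
  unfolding dirichlet_def by (simp add: sum_distrib_left algebra_simps power2_eq_square)

lemma deg_inner_slap_left:
  "deg_inner g (slap V adj \<sigma> f) = (\<Sum>x\<in>V. g x * (\<Sum>y\<in>Nb x. \<sigma> x y * f y - f x))"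
  unfolding deg_inner_def slap_eq
proof (intro sum.cong refl)
  fix x
  show "dg x * g x * ((\<Sum>y\<in>Nb x. \<sigma> x y * f y - f x) / dg x) = g x * (\<Sum>y\<in>Nb x. \<sigma> x y * f y - f x)"
    by (cases "Nb x = {}") (auto simp: deg_def card_eq_0_iff finite_nbrs)
qed

lemma dirichlet_eq_sum: "dirichlet f g = 2 * (\<Sum>x\<in>V. g x * (\<Sum>y\<in>Nb x. f x - \<sigma> x y * f y))"
proof -
  have split: "dirichlet f g = (\<Sum>x\<in>V. \<Sum>y\<in>Nb x. (f x - \<sigma> x y * f y) * g x)
     - (\<Sum>x\<in>V. \<Sum>y\<in>Nb x. (f x - \<sigma> x y * f y) * (\<sigma> x y * g y))"
    unfolding dirichlet_def by (simp add: sum_subtractf[symmetric] algebra_simps)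
  have "(\<Sum>x\<in>V. \<Sum>y\<in>Nb x. (f x - \<sigma> x y * f y) * (\<sigma> x y * g y))
      = (\<Sum>x\<in>V. \<Sum>y\<in>Nb x. (f y - \<sigma> y x * f x) * (\<sigma> y x * g x))"
    by (rule sum_nbrs_swap)
  also have "\<dots> = (\<Sum>x\<in>V. \<Sum>y\<in>Nb x. - ((f x - \<sigma> x y * f y) * g x))"
  proof (intro sum.cong refl)
    fix x y assume "y \<in> Nb x"
    then have "adj x y" using nbrs_iff by auto
    then have "\<sigma> y x = \<sigma> x y" "\<sigma> x y * \<sigma> x y = 1" using sigma_sym sigma_square by metis+
    then show "(f y - \<sigma> y x * f x) * (\<sigma> y x * g x) = - ((f x - \<sigma> x y * f y) * g x)"
      by (simp add: algebra_simps)
  qed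
  finally have swapped: "(\<Sum>x\<in>V. \<Sum>y\<in>Nb x. (f x - \<sigma> x y * f y) * (\<sigma> x y * g y))
     = - (\<Sum>x\<in>V. \<Sum>y\<in>Nb x. (f x - \<sigma> x y * f y) * g x)"
    by (simp add: sum_negf)
  have "(\<Sum>x\<in>V. \<Sum>y\<in>Nb x. (f x - \<sigma> x y * f y) * g x)
      = (\<Sum>x\<in>V. g x * (\<Sum>y\<in>Nb x. f x - \<sigma> x y * f y))"
    by (simp add: sum_distrib_left mult.commute)
  then show ?thesis unfolding split swapped by simp
qed

lemma green_formula: "deg_inner g (slap V adj \<sigma> f) = - dirichlet f g / 2"
proof -
  have "(\<Sum>y\<in>Nb x. \<sigma> x y * f y - f x) = - (\<Sum>y\<in>Nb x. f x - \<sigma> x y * f y)" for x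
    by (simp add: sum_negf[symmetric])
  then show ?thesis unfolding deg_inner_slap_left dirichlet_eq_sum by (simp add: sum_negf)
qed

lemma deg_inner_indicator: "x \<in> V \<Longrightarrow> deg_inner (\<lambda>z. if z = x then 1 else 0) h = dg x * h x"
  unfolding deg_inner_def using finite_V
  by (simp add: if_distrib if_distribR sum.delta cong: if_cong)

lemma dirichlet_indicator:
  "x \<in> V \<Longrightarrow> dirichlet f (\<lambda>z. if z = x then 1 else 0) = - 2 * dg x * slap V adj \<sigma> f x"
  using green_formula[of "\<lambda>z. if z = x then 1 else 0" f] deg_inner_indicator[of x] by simp

lemma sum_nbrs_sq_le_dirichlet:
  "w \<in> V \<Longrightarrow> (\<Sum>y\<in>Nb w. (f w - \<sigma> w y * f y)\<^sup>2) \<le> dirichlet f f"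
  unfolding dirichlet_def power2_eq_square by (rule member_le_sum) (auto intro: sum_nonneg finite_V)

end

section \<open>Gradient estimates along signed walks\<close>

inductive signed_walk :: "('a \<Rightarrow> 'a \<Rightarrow> bool) \<Rightarrow> ('a \<Rightarrow> 'a \<Rightarrow> real) \<Rightarrow> 'a \<Rightarrow> nat \<Rightarrow> 'a \<Rightarrow> real \<Rightarrow> bool"
  for adj \<sigma> where
  Nil: "signed_walk adj \<sigma> x 0 x 1"
| snoc: "signed_walk adj \<sigma> x n y s \<Longrightarrow> adj y z \<Longrightarrow> signed_walk adj \<sigma> x (Suc n) z (s * \<sigma> y z)"

inductive_cases signed_walk_0E: "signed_walk adj \<sigma> x 0 y s"
inductive_cases signed_walk_SucE: "signed_walk adj \<sigma> x (Suc n) z s"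

text \<open>If \<open>\<Sum>y\<in>Nb w. (f w - \<sigma> w y * f y)\<^sup>2 \<le> G\<close> at every vertex, then \<open>f\<close> changes by at
  most \<open>sqrt G\<close> along an edge and by at most \<open>sqrt (2 * G)\<close> along two consecutive edges, whose
  contributions meet in the sum at their common vertex. A walk of length \<open>n\<close> is cut into
  \<open>n div 2\<close> such pairs and possibly one single edge.\<close>

definition two_step_bound :: "real \<Rightarrow> nat \<Rightarrow> real" where
  "two_step_bound G n = real (n div 2) * sqrt (2 * G) + real (n mod 2) * sqrt G"

definition walk_factor :: "nat \<Rightarrow> real" where
  "walk_factor m = real m * real_of_int \<lceil>real m / 2\<rceil>"

lemma walk_factor_nonneg: "0 \<le> walk_factor m"
  unfolding walk_factor_def by (simp add: ceiling_le_zero not_le)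

lemma two_step_bound_Suc_Suc: "two_step_bound G (Suc (Suc n)) = two_step_bound G n + sqrt (2 * G)"
  unfolding two_step_bound_def by (simp add: algebra_simps)

lemma two_step_bound_mono:
  assumes "0 \<le> G" "n \<le> m"
  shows "two_step_bound G n \<le> two_step_bound G m"
  using assms(2)
proof (induction m rule: dec_induct)
  case (step m)
  have "two_step_bound G m \<le> two_step_bound G (Suc m)"
  proof (cases "even m")
    case True
    then show ?thesis unfolding two_step_bound_def using assms(1) by (simp add: even_Suc_div_two)
  next
    case False
    have "sqrt G \<le> sqrt (2 * G)" using assms(1) by simp
    with False show ?thesis
      unfolding two_step_bound_def by (simp add: odd_Suc_div_two odd_iff_mod_2_eq_one algebra_simps)
  qed
  with step.IH show ?case by simp
qed simp

lemma two_step_bound_square: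
  assumes G: "0 \<le> G"
  shows "(two_step_bound G m)\<^sup>2 \<le> walk_factor m * G"
proof -
  define g where "g = sqrt G"
  have g: "g \<ge> 0" "G = g\<^sup>2" unfolding g_def using G by auto
  have s2: "sqrt (2 * G) = sqrt 2 * g" unfolding g_def by (simp add: real_sqrt_mult)
  show ?thesis
  proof (cases "even m")
    case True
    then obtain k where m: "m = 2 * k" by blast
    have "(two_step_bound G m)\<^sup>2 = 2 * real k * real k * g\<^sup>2"
      unfolding two_step_bound_def s2 m
      by (simp add: power_mult_distrib algebra_simps power2_eq_square)
    also have "\<dots> = walk_factor m * G" unfolding walk_factor_def m g(2) by simp
    finally show ?thesis by simp
  next
    case False
    then obtain k where m: "m = 2 * k + 1" using oddE by blast
    have "real m / 2 > real k" unfolding m by simp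
    then have "\<lceil>real m / 2\<rceil> > int k" by (simp add: less_ceiling_iff)
    then have "real_of_int \<lceil>real m / 2\<rceil> \<ge> real k + 1" by linarith
    from mult_left_mono[OF this, of "real m"]
    have ceil: "(2 * real k + 1) * (real k + 1) \<le> walk_factor m"
      unfolding walk_factor_def m by (simp add: algebra_simps)
    have "m div 2 = k" "m mod 2 = 1" unfolding m by auto
    then have b: "two_step_bound G m = real k * sqrt 2 * g + g"
      unfolding two_step_bound_def s2 g_def by simp
    have "sqrt 2 \<le> 3/2" by (rule real_le_lsqrt) (auto simp: power2_eq_square)
    then have "real k * (2 * sqrt 2) \<le> real k * 3" by (intro mult_left_mono) auto
    then have "2 * real k * real k + 2 * sqrt 2 * real k + 1 \<le> (2 * real k + 1) * (real k + 1)"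
      by (simp add: algebra_simps)
    also note ceil
    finally have "g\<^sup>2 * (2 * real k * real k + 2 * sqrt 2 * real k + 1) \<le> g\<^sup>2 * walk_factor m"
      by (rule mult_left_mono) simp
    moreover have "(two_step_bound G m)\<^sup>2 = g\<^sup>2 * (2 * real k * real k + 2 * sqrt 2 * real k + 1)"
      unfolding b by (simp add: power2_eq_square algebra_simps)
    ultimately show ?thesis using g by (simp add: mult.commute)
  qed
qed

context sgraph
begin

lemma signed_walk_sign: "signed_walk adj \<sigma> x n y s \<Longrightarrow> s = 1 \<or> s = -1"
  by (induction rule: signed_walk.induct) (auto dest: sigma_cases)

lemma relpowp_imp_signed_walk: "(adj ^^ n) x y \<Longrightarrow> \<exists>s. signed_walk adj \<sigma> x n y s"
proof (induction n arbitrary: y)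
  case (Suc n)
  then obtain w where "(adj ^^ n) x w" "adj w y" by auto
  with Suc.IH show ?case by (blast intro: signed_walk.snoc)
qed (auto intro: signed_walk.Nil)

lemma edge_diff_le:
  assumes "adj w y" and G: "(\<Sum>y\<in>Nb w. (f w - \<sigma> w y * f y)\<^sup>2) \<le> G"
  shows "\<bar>f w - \<sigma> w y * f y\<bar> \<le> sqrt G"
proof -
  have "(f w - \<sigma> w y * f y)\<^sup>2 \<le> (\<Sum>y\<in>Nb w. (f w - \<sigma> w y * f y)\<^sup>2)"
    by (rule member_le_sum) (use assms(1) nbrs_iff finite_nbrs in auto)
  with G show ?thesis using real_le_rsqrt by fastforce
qed

lemma two_edge_diff_le:
  assumes vw: "adj v w" and wz: "adj w z" and G: "(\<Sum>y\<in>Nb w. (f w - \<sigma> w y * f y)\<^sup>2) \<le> G"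
  shows "\<bar>f v - \<sigma> v w * \<sigma> w z * f z\<bar> \<le> sqrt (2 * G)"
proof (cases "v = z")
  case True
  have "0 \<le> G" using G by (meson order_trans sum_nonneg zero_le_power2)
  then show ?thesis using True sigma_sym[OF vw] sigma_square[OF vw] by simp
next
  case False
  define A where "A = \<bar>f w - \<sigma> w v * f v\<bar>"
  define B where "B = \<bar>f w - \<sigma> w z * f z\<bar>"
  have "f v - \<sigma> v w * \<sigma> w z * f z = \<sigma> v w * (f w - \<sigma> w z * f z) - \<sigma> v w * (f w - \<sigma> w v * f v)"
    using sigma_sym[OF vw] sigma_square[OF vw] by (simp add: algebra_simps)
  then have "\<bar>f v - \<sigma> v w * \<sigma> w z * f z\<bar> \<le> A + B"
    unfolding A_def B_def using abs_sigma[OF vw]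
    by (metis abs_mult abs_triangle_ineq4 add.commute mult_1)
  moreover have "A\<^sup>2 + B\<^sup>2 \<le> G"
  proof -
    have "{v, z} \<subseteq> Nb w" using wz adj_sym[OF vw] nbrs_iff by auto
    then have "(\<Sum>y\<in>{v, z}. (f w - \<sigma> w y * f y)\<^sup>2) \<le> (\<Sum>y\<in>Nb w. (f w - \<sigma> w y * f y)\<^sup>2)"
      by (intro sum_mono2 finite_nbrs) auto
    then show ?thesis using False G unfolding A_def B_def by simp
  qed
  moreover have "(A + B)\<^sup>2 \<le> 2 * (A\<^sup>2 + B\<^sup>2)"
    using zero_le_power2[of "A - B"] by (simp add: power2_eq_square algebra_simps)
  ultimately show ?thesis
    using real_le_rsqrt[of "A + B" "2 * G"] unfolding A_def B_def by fastforce
qed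

lemma signed_walk_diff_le:
  assumes G: "\<forall>w\<in>V. (\<Sum>y\<in>Nb w. (f w - \<sigma> w y * f y)\<^sup>2) \<le> G"
  shows "signed_walk adj \<sigma> x n z s \<Longrightarrow> \<bar>f x - s * f z\<bar> \<le> two_step_bound G n"
proof (induction n arbitrary: z s rule: less_induct)
  case (less n)
  consider "n = 0" | "n = 1" | m where "n = Suc (Suc m)"
    by (metis One_nat_def not0_implies_Suc)
  then show ?case
  proof cases
    case 1
    with less.prems show ?thesis unfolding two_step_bound_def by (auto elim: signed_walk_0E)
  next
    case 2
    with less.prems have "adj x z" "s = \<sigma> x z"
      by (auto elim!: signed_walk_SucE signed_walk_0E simp: One_nat_def)
    with 2 show ?thesis
      using edge_diff_le[of x z f G] G adj_in_V unfolding two_step_bound_def by simp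
  next
    case 3
    with less.prems obtain v w s0 where
      v: "signed_walk adj \<sigma> x m v s0" "adj v w" and wz: "adj w z" and s: "s = s0 * \<sigma> v w * \<sigma> w z"
      by (auto elim!: signed_walk_SucE)
    have "f x - s * f z = (f x - s0 * f v) + s0 * (f v - \<sigma> v w * \<sigma> w z * f z)"
      unfolding s by (simp add: algebra_simps)
    moreover have "\<bar>s0\<bar> = 1" using signed_walk_sign[OF v(1)] by auto
    ultimately have "\<bar>f x - s * f z\<bar> \<le> \<bar>f x - s0 * f v\<bar> + \<bar>f v - \<sigma> v w * \<sigma> w z * f z\<bar>"
      by (metis abs_mult abs_triangle_ineq mult_1)
    also have "\<dots> \<le> two_step_bound G m + sqrt (2 * G)"
      using less.IH[of m v s0] v 3 two_edge_diff_le[OF v(2) wz] G adj_in_V[OF wz]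
      by (intro add_mono) auto
    finally show ?thesis unfolding 3 two_step_bound_Suc_Suc .
  qed
qed

lemma balanced_if_switching:
  assumes "\<And>y z. adj y z \<Longrightarrow> \<sigma> y z = \<tau> y * \<tau> z" and "\<And>y. y \<in> V \<Longrightarrow> \<tau> y * \<tau> y = 1"
  shows "balanced V adj \<sigma>"
  unfolding balanced_def
proof (intro allI impI)
  fix c assume c: "is_cycle V adj c"
  define L where "L = length c"
  have L: "L \<ge> 3" "set c \<subseteq> V" and adj_c: "\<And>i. i < L \<Longrightarrow> adj (c ! i) (c ! (Suc i mod L))"
    using c unfolding is_cycle_def L_def by auto
  have "cycle_sign \<sigma> c = (\<Prod>i<L. \<tau> (c ! i) * \<tau> (c ! (Suc i mod L)))"
    unfolding cycle_sign_def L_def[symmetric] using adj_c assms(1) by (intro prod.cong) auto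
  also have "\<dots> = (\<Prod>i<L. \<tau> (c ! i)) * (\<Prod>i<L. \<tau> (c ! i))"
    using prod_lessThan_rotate[of L "\<lambda>i. \<tau> (c ! i)"] L by (simp add: prod.distrib)
  also have "\<dots> = (\<Prod>i<L. \<tau> (c ! i) * \<tau> (c ! i))"
    by (rule prod.distrib[symmetric])
  also have "\<dots> = 1"
    using L assms(2) unfolding L_def by (intro prod.neutral) (auto simp: subset_iff)
  finally show "cycle_sign \<sigma> c = 1" .
qed

end

locale unbalanced_sgraph = sgraph +
  assumes connected: "connected_graph V adj"
    and unbalanced: "\<not> balanced V adj \<sigma>"
begin

lemma deg_pos: assumes "x \<in> V" shows "dg x > 0"
proof -
  obtain c where "is_cycle V adj c" using unbalanced unfolding balanced_def by auto
  then have c: "length c \<ge> 3" "distinct c" "set c \<subseteq> V" unfolding is_cycle_def by auto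
  then have "0 < length c" "1 < length c" by auto
  with c have "c ! 0 \<in> V" "c ! 1 \<in> V" "c ! 0 \<noteq> c ! 1"
    using nth_mem[of 0 c] nth_mem[of 1 c] nth_eq_iff_index_eq[of c 0 1] by auto
  then obtain y where y: "y \<in> V" "y \<noteq> x" by metis
  have "adj\<^sup>*\<^sup>* x y" using connected assms y unfolding connected_graph_def by auto
  then obtain z where "adj x z" using y(2) by (metis converse_rtranclpE)
  then have "Nb x \<noteq> {}" using nbrs_iff by auto
  then show ?thesis unfolding deg_def using finite_nbrs by (simp add: card_gt_0_iff)
qed

lemma gdist_le_diam:
  assumes "x \<in> V" "y \<in> V"
  shows "gdist adj x y \<le> diam V adj" and "(adj ^^ gdist adj x y) x y"
proof -
  have "adj\<^sup>*\<^sup>* x y" using connected assms unfolding connected_graph_def by auto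
  then obtain n where "(adj ^^ n) x y" using rtranclp_imp_relpowp by metis
  then show "(adj ^^ gdist adj x y) x y" unfolding gdist_def by (rule LeastI)
  have "finite {gdist adj x y | x y. x \<in> V \<and> y \<in> V}"
    using finite_image_set2[of "\<lambda>x. x \<in> V" "\<lambda>y. y \<in> V" "gdist adj"] finite_V by simp
  then show "gdist adj x y \<le> diam V adj" unfolding diam_def
    by (rule Max_ge) (use assms in blast)
qed

text \<open>If along every short walk from \<open>x0\<close> the sign of the walk agreed with the sign of
  \<open>f y * f x0\<close>, then \<open>sgn (f y * f x0)\<close> would switch \<open>\<sigma>\<close> to the all-positive signature.\<close>

lemma sign_changing_walk:
  assumes x0: "x0 \<in> V"
  obtains n y s where "n \<le> diam V adj + 1" "signed_walk adj \<sigma> x0 n y s" "s * f y * f x0 \<le> 0"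
proof (rule ccontr)
  note found = that
  assume "\<not> thesis"
  then have pos: "s * f y * f x0 > 0" if "n \<le> diam V adj + 1" "signed_walk adj \<sigma> x0 n y s" for n y s
    using found that by (meson not_le)
  define \<tau> where "\<tau> y = sgn (f y * f x0)" for y
  have sign: "s = \<tau> y" if "n \<le> diam V adj + 1" "signed_walk adj \<sigma> x0 n y s" for n y s
    using signed_walk_sign[OF that(2)] pos[OF that] unfolding \<tau>_def
    by (auto simp: sgn_if zero_less_mult_iff mult_less_0_iff)
  have reach: "\<exists>k s. k \<le> diam V adj \<and> signed_walk adj \<sigma> x0 k y s" if "y \<in> V" for y
    using relpowp_imp_signed_walk[OF gdist_le_diam(2)[OF x0 that]] gdist_le_diam(1)[OF x0 that]
    by blast
  have \<tau>_sq: "\<tau> y * \<tau> y = 1" if "y \<in> V" for y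
    using reach[OF that] sign signed_walk_sign
    by (metis le_SucI mult_1 mult_minus1 add_0 Suc_eq_plus1 minus_mult_minus)
  have "\<sigma> y z = \<tau> y * \<tau> z" if yz: "adj y z" for y z
  proof -
    obtain k s where ks: "k \<le> diam V adj" "signed_walk adj \<sigma> x0 k y s"
      using reach adj_in_V[OF yz] by blast
    then have "s = \<tau> y" "s * \<sigma> y z = \<tau> z"
      using sign[of k y s] sign[of "Suc k" z "s * \<sigma> y z"] signed_walk.snoc[OF ks(2) yz] by auto
    then show ?thesis using \<tau>_sq adj_in_V[OF yz] by (metis mult.assoc mult_1)
  qed
  then have "balanced V adj \<sigma>" using \<tau>_sq by (rule balanced_if_switching)
  then show False using unbalanced by simp
qed

lemma sq_le_walk_factor:
  assumes x0: "x0 \<in> V" and G: "\<forall>w\<in>V. (\<Sum>y\<in>Nb w. (f w - \<sigma> w y * f y)\<^sup>2) \<le> G"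
  shows "(f x0)\<^sup>2 \<le> walk_factor (diam V adj + 1) * G"
proof -
  have G0: "0 \<le> G" using G x0 by (meson order_trans sum_nonneg zero_le_power2)
  obtain n y s where walk: "n \<le> diam V adj + 1" "signed_walk adj \<sigma> x0 n y s" "s * f y * f x0 \<le> 0"
    using sign_changing_walk[OF x0] by blast
  have "s * s = 1" using signed_walk_sign[OF walk(2)] by auto
  then have "(f x0 - s * f y)\<^sup>2 = (f x0)\<^sup>2 - 2 * (s * f y * f x0) + (f y)\<^sup>2"
    by (simp add: power2_eq_square algebra_simps)
  then have "(f x0)\<^sup>2 \<le> (f x0 - s * f y)\<^sup>2"
    using walk(3) zero_le_power2[of "f y"] by linarith
  also have "\<dots> = \<bar>f x0 - s * f y\<bar>\<^sup>2" by simp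
  also have "\<dots> \<le> (two_step_bound G (diam V adj + 1))\<^sup>2"
    using signed_walk_diff_le[OF G walk(2)] two_step_bound_mono[OF G0 walk(1)]
    by (intro power_mono) auto
  also have "\<dots> \<le> walk_factor (diam V adj + 1) * G"
    by (rule two_step_bound_square[OF G0])
  finally show ?thesis .
qed

end

section \<open>The first eigenvalue\<close>

context sgraph
begin

text \<open>Under \<open>CD(0, N)\<close> the maximum principle applied to
  \<open>K = Gamma(\<phi>) + (1 + sqrtN N) * lam * \<phi>\<^sup>2\<close> gives, at a maximum point of \<open>K\<close>,
  \<open>2 * lam * sqrtN N * (Gamma(\<phi>) - (1 + sqrtN N) * lam * \<phi>\<^sup>2) \<le> 0\<close>.\<close>

lemma eigenfunction_gradient_bound:
  assumes CD: "CD V adj \<sigma> 0 N" and N: "N > 1" and lam: "lam > 0"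
    and eigen: "\<And>x. slap V adj \<sigma> \<phi> x = - lam * \<phi> x"
    and M: "\<And>x. x \<in> V \<Longrightarrow> (\<phi> x)\<^sup>2 \<le> M" and w: "w \<in> V"
  shows "sGamma V adj \<sigma> \<phi> \<phi> w \<le> 2 * (1 + sqrtN N) * lam * M"
proof -
  define s where "s = sqrtN N"
  have s: "s > 0" "invN N = 1 - s\<^sup>2" unfolding s_def using sqrtN_facts[OF N] by auto
  define K where "K z = sGamma V adj \<sigma> \<phi> \<phi> z + ((1 + s) * lam) * (\<phi> z * \<phi> z)" for z
  obtain x0 where x0: "x0 \<in> V" "\<And>x. x \<in> V \<Longrightarrow> K x \<le> K x0"
    using ex_max_on_V[of K] by blast
  define G where "G = sGamma V adj \<sigma> \<phi> \<phi> x0"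
  define P where "P = \<phi> x0 * \<phi> x0"
  have "slap V adj \<sigma> \<phi> = (\<lambda>z. - lam * \<phi> z)" using eigen by auto
  then have "lap V adj K x0
      = 2 * sGamma2 V adj \<sigma> \<phi> \<phi> x0 - 2 * lam * G + (1 + s) * lam * (2 * G - 2 * lam * P)"
    unfolding K_def lap_add_scaled lap_sGamma lap_square sGamma_scale_right G_def P_def eigen
    by (simp add: algebra_simps)
  moreover have "invN N * (slap V adj \<sigma> \<phi> x0)\<^sup>2 \<le> sGamma2 V adj \<sigma> \<phi> \<phi> x0"
    using CD x0(1) by (rule CD_zero_bound)
  then have "sGamma2 V adj \<sigma> \<phi> \<phi> x0 \<ge> invN N * (lam\<^sup>2 * P)"
    unfolding eigen P_def by (simp add: power2_eq_square algebra_simps)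
  moreover have "lap V adj K x0 \<le> 0" using lap_nonpos_at_max x0 by blast
  ultimately have
    "2 * (1 - s\<^sup>2) * (lam\<^sup>2 * P) - 2 * lam * G + (1 + s) * lam * (2 * G - 2 * lam * P) \<le> 0"
    unfolding s(2) by linarith
  also have "2 * (1 - s\<^sup>2) * (lam\<^sup>2 * P) - 2 * lam * G + (1 + s) * lam * (2 * G - 2 * lam * P)
      = (2 * lam * s) * (G - (1 + s) * lam * P)"
    by (simp add: algebra_simps power2_eq_square)
  finally have GP: "G \<le> (1 + s) * lam * P"
    using lam s(1) by (simp add: mult_le_0_iff)
  have "0 \<le> ((1 + s) * lam) * (\<phi> w * \<phi> w)" using lam s(1) by simp
  then have "sGamma V adj \<sigma> \<phi> \<phi> w \<le> K w" unfolding K_def by linarith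
  also have "\<dots> \<le> K x0" by (rule x0(2)[OF w])
  also have "\<dots> = G + (1 + s) * lam * P" unfolding K_def G_def P_def by simp
  also have "\<dots> \<le> 2 * ((1 + s) * lam * P)" using GP by linarith
  also have "\<dots> \<le> 2 * ((1 + s) * lam * M)"
    using M[OF x0(1)] lam s(1) unfolding P_def
    by (intro mult_left_mono) (simp_all add: power2_eq_square)
  finally show ?thesis unfolding s_def by (simp add: algebra_simps)
qed

end

context unbalanced_sgraph
begin

abbreviation vfun_topology :: "('a \<Rightarrow> real) topology" where
  "vfun_topology \<equiv> product_topology (\<lambda>_. euclideanreal) V"

lemma continuous_map_deg_inner: "continuous_map vfun_topology euclideanreal (\<lambda>f. deg_inner f f)"
  unfolding deg_inner_def using finite_V
  by (intro continuous_intros continuous_map_product_projection) auto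

lemma continuous_map_dirichlet: "continuous_map vfun_topology euclideanreal (\<lambda>f. dirichlet f f)"
  unfolding dirichlet_def using finite_V finite_nbrs nbrs_subset
  by (intro continuous_intros continuous_map_product_projection) auto

text \<open>Positive degrees confine the unit sphere of \<open>deg_inner\<close> to the cube \<open>[-1, 1]\<^sup>V\<close>.\<close>

lemma compactin_deg_inner_sphere:
  "compactin vfun_topology {f \<in> topspace vfun_topology. deg_inner f f = 1}"
proof -
  define C where "C = {f \<in> topspace vfun_topology. deg_inner f f = 1}"
  have "C \<subseteq> PiE V (\<lambda>_. {-1..1})"
  proof
    fix f assume f: "f \<in> C"
    have "\<bar>f x\<bar> \<le> 1" if x: "x \<in> V" for x
    proof -
      have "dg x * f x * f x \<le> deg_inner f f" unfolding deg_inner_def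
        by (rule member_le_sum[OF x _ finite_V]) (simp add: mult.assoc)
      then have "dg x * (f x)\<^sup>2 \<le> 1 * 1"
        using f unfolding C_def by (simp add: power2_eq_square mult.assoc)
      moreover have "1 \<le> dg x" using deg_pos[OF x] by simp
      ultimately have "(f x)\<^sup>2 \<le> 1"
        by (metis dual_order.trans mult_right_mono mult_1 zero_le_power2 mult.commute)
      then show ?thesis by (simp add: abs_square_le_1)
    qed
    then show "f \<in> PiE V (\<lambda>_. {-1..1})" using f unfolding C_def by (auto simp: abs_le_iff)
  qed
  moreover have "closedin vfun_topology C" unfolding C_def
    using closedin_continuous_map_preimage[OF continuous_map_deg_inner, of "{1}"] by simp
  moreover have "compactin vfun_topology (PiE V (\<lambda>_. {-1..1::real}))"
    by (simp add: compactin_PiE)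
  ultimately show ?thesis unfolding C_def[symmetric] by (rule closed_compactin[rotated])
qed

lemma rayleigh_minimizer:
  obtains \<phi> where "\<And>x. x \<notin> V \<Longrightarrow> \<phi> x = 0" "deg_inner \<phi> \<phi> = 1"
    "\<And>g. dirichlet \<phi> \<phi> * deg_inner g g \<le> dirichlet g g"
proof -
  define C where "C = {f \<in> topspace vfun_topology. deg_inner f f = 1}"
  have compact: "compact ((\<lambda>f. dirichlet f f) ` C)"
    using image_compactin[OF compactin_deg_inner_sphere continuous_map_dirichlet]
    unfolding C_def by simp
  obtain x1 where x1: "x1 \<in> V" using V_ne by blast
  define e where "e = restrict (\<lambda>x. if x = x1 then 1 / sqrt (dg x1) else 0) V"
  have "deg_inner e e = (\<Sum>x\<in>V. if x = x1 then 1 else 0)"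
    unfolding deg_inner_def e_def using deg_pos[OF x1] by (intro sum.cong refl) auto
  then have "e \<in> C" unfolding C_def e_def using x1 finite_V by simp
  then have "(\<lambda>f. dirichlet f f) ` C \<noteq> {}" by blast
  then obtain q where q: "q \<in> (\<lambda>f. dirichlet f f) ` C" "\<And>r. r \<in> (\<lambda>f. dirichlet f f) ` C \<Longrightarrow> q \<le> r"
    using compact_attains_inf[OF compact] by blast
  then obtain \<phi>0 where \<phi>0: "\<phi>0 \<in> C" "dirichlet \<phi>0 \<phi>0 = q" by blast
  define \<phi> where "\<phi> x = (if x \<in> V then \<phi>0 x else 0)" for x
  have "deg_inner \<phi> \<phi> = deg_inner \<phi>0 \<phi>0" "dirichlet \<phi> \<phi> = dirichlet \<phi>0 \<phi>0"
    unfolding \<phi>_def by (intro deg_inner_cong dirichlet_cong; simp)+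
  then have \<phi>: "deg_inner \<phi> \<phi> = 1" "dirichlet \<phi> \<phi> = q" using \<phi>0 unfolding C_def by auto
  show ?thesis
  proof
    show "\<phi> x = 0" if "x \<notin> V" for x using that unfolding \<phi>_def by simp
    show "deg_inner \<phi> \<phi> = 1" by (rule \<phi>(1))
    show "dirichlet \<phi> \<phi> * deg_inner g g \<le> dirichlet g g" for g
    proof (cases "deg_inner g g = 0")
      case True
      then show ?thesis using dirichlet_nonneg[of g] by simp
    next
      case False
      then have pos: "deg_inner g g > 0" using deg_inner_nonneg[of g] by simp
      define c where "c = 1 / sqrt (deg_inner g g)"
      define h where "h = restrict (\<lambda>x. c * g x) V"
      have "deg_inner h h = c\<^sup>2 * deg_inner g g"
        unfolding h_def deg_inner_scale[symmetric] by (rule deg_inner_cong) auto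
      then have "h \<in> C" unfolding C_def h_def c_def using pos by (simp add: power_divide)
      then have "q \<le> dirichlet h h" using q(2) by blast
      also have "dirichlet h h = c\<^sup>2 * dirichlet g g"
        unfolding h_def dirichlet_scale[symmetric] by (rule dirichlet_cong) auto
      finally have "q * deg_inner g g \<le> (c\<^sup>2 * deg_inner g g) * dirichlet g g"
        using pos by (simp add: mult_right_mono algebra_simps)
      then show ?thesis using pos \<phi>(2) unfolding c_def by (simp add: power_divide)
    qed
  qed
qed

lemma first_eigenfunction:
  obtains \<phi> lam where "deg_inner \<phi> \<phi> = 1" "dirichlet \<phi> \<phi> = 2 * lam"
    "\<And>g. 2 * lam * deg_inner g g \<le> dirichlet g g" "\<And>x. slap V adj \<sigma> \<phi> x = - lam * \<phi> x"
proof -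
  obtain \<phi> where out: "\<And>x. x \<notin> V \<Longrightarrow> \<phi> x = 0" and norm: "deg_inner \<phi> \<phi> = 1"
    and min: "\<And>g. dirichlet \<phi> \<phi> * deg_inner g g \<le> dirichlet g g"
    by (rule rayleigh_minimizer) blast
  define lam where "lam = dirichlet \<phi> \<phi> / 2"
  have eigen: "slap V adj \<sigma> \<phi> x = - lam * \<phi> x" for x
  proof (cases "x \<in> V")
    case True
    define g where "g = (\<lambda>z. if z = x then 1 else (0::real))"
    have "0 \<le> 2 * e * (dirichlet \<phi> g - 2 * lam * deg_inner \<phi> g)
              + e\<^sup>2 * (dirichlet g g - 2 * lam * deg_inner g g)" for e
      using min[of "\<lambda>z. \<phi> z + e * g z"] norm
      unfolding deg_inner_add_scaled dirichlet_add_scaled lam_def by (simp add: algebra_simps)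
    then have "dirichlet \<phi> g = 2 * lam * deg_inner \<phi> g"
      using quadratic_nonneg_imp_linear_zero by fastforce
    moreover have "deg_inner \<phi> g = dg x * \<phi> x"
      using deg_inner_indicator[OF True, of \<phi>] unfolding g_def deg_inner_def
      by (simp add: mult.commute mult.left_commute)
    ultimately have "dg x * (slap V adj \<sigma> \<phi> x + lam * \<phi> x) = 0"
      using dirichlet_indicator[OF True, of \<phi>] unfolding g_def by (simp add: algebra_simps)
    then have "slap V adj \<sigma> \<phi> x + lam * \<phi> x = 0" using deg_pos[OF True] by simp
    then show ?thesis by linarith
  qed (simp add: slap_outside out)
  show ?thesis
    by (rule that[of \<phi> lam]) (use norm min eigen in \<open>simp_all add: lam_def\<close>)
qed

lemma eigenvalue_lower_bound:
  assumes CD: "CD V adj \<sigma> 0 N" and N: "N > 1"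
  obtains lam where "lam > 0" "\<And>g. 2 * lam * deg_inner g g \<le> dirichlet g g"
    "1 \<le> 4 * (1 + sqrtN N) * real (max_deg V adj) * lam * walk_factor (diam V adj + 1)"
proof -
  obtain \<phi> lam where norm: "deg_inner \<phi> \<phi> = 1" and energy: "dirichlet \<phi> \<phi> = 2 * lam"
    and rayleigh: "\<And>g. 2 * lam * deg_inner g g \<le> dirichlet g g"
    and eigen: "\<And>x. slap V adj \<sigma> \<phi> x = - lam * \<phi> x"
    by (rule first_eigenfunction) blast
  define R where "R = walk_factor (diam V adj + 1)"
  define C where "C = 4 * (1 + sqrtN N) * real (max_deg V adj)"
  obtain x0 where x0: "x0 \<in> V" "\<And>x. x \<in> V \<Longrightarrow> (\<phi> x)\<^sup>2 \<le> (\<phi> x0)\<^sup>2"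
    using ex_max_on_V[of "\<lambda>x. (\<phi> x)\<^sup>2"] by blast
  have "\<phi> x0 \<noteq> 0"
  proof
    assume "\<phi> x0 = 0"
    then have "\<forall>x\<in>V. \<phi> x = 0" using x0(2) by simp
    then show False using norm unfolding deg_inner_def by simp
  qed
  then have P: "(\<phi> x0)\<^sup>2 > 0" by simp
  have "\<forall>w\<in>V. (\<Sum>y\<in>Nb w. (\<phi> w - \<sigma> w y * \<phi> y)\<^sup>2) \<le> 2 * lam"
    using sum_nbrs_sq_le_dirichlet[of _ \<phi>] unfolding energy by blast
  then have "(\<phi> x0)\<^sup>2 \<le> R * (2 * lam)"
    unfolding R_def by (rule sq_le_walk_factor[OF x0(1)])
  with P have "0 < R * (2 * lam)" by linarith
  then have lam: "lam > 0"
    using walk_factor_nonneg[of "diam V adj + 1"] unfolding R_def by (simp add: zero_less_mult_iff)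
  have "(\<Sum>y\<in>Nb w. (\<phi> w - \<sigma> w y * \<phi> y)\<^sup>2) \<le> C * lam * (\<phi> x0)\<^sup>2" if w: "w \<in> V" for w
  proof -
    have "(\<Sum>y\<in>Nb w. (\<phi> w - \<sigma> w y * \<phi> y)\<^sup>2) = 2 * dg w * sGamma V adj \<sigma> \<phi> \<phi> w"
      by (rule sum_nbrs_sq_eq_sGamma)
    also have "\<dots> \<le> 2 * real (max_deg V adj) * (2 * (1 + sqrtN N) * lam * (\<phi> x0)\<^sup>2)"
      using eigenfunction_gradient_bound[OF CD N lam eigen x0(2) w] deg_le_max_deg[OF w]
        sGamma_nonneg[of \<phi> w] by (intro mult_mono) auto
    finally show ?thesis unfolding C_def by (simp add: algebra_simps)
  qed
  then have "(\<phi> x0)\<^sup>2 \<le> R * (C * lam * (\<phi> x0)\<^sup>2)"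
    unfolding R_def by (intro sq_le_walk_factor[OF x0(1)] ballI)
  then have "1 * (\<phi> x0)\<^sup>2 \<le> (C * lam * R) * (\<phi> x0)\<^sup>2"
    by (simp add: algebra_simps)
  then have "1 \<le> C * lam * R"
    using P by (rule mult_right_le_imp_le)
  with lam rayleigh show ?thesis unfolding R_def C_def by (rule that)
qed

end

section \<open>The heat semigroup\<close>

context sgraph
begin

definition heat :: "('a \<Rightarrow> real) \<Rightarrow> real \<Rightarrow> 'a \<Rightarrow> real" where
  "heat f t x = (\<Sum>n. (slap V adj \<sigma> ^^ n) f x / fact n * t ^ n)"

lemma abs_slap_iter_le:
  assumes "\<And>z. z \<in> V \<Longrightarrow> \<bar>f z\<bar> \<le> B" "x \<in> V"
  shows "\<bar>(slap V adj \<sigma> ^^ n) f x\<bar> \<le> 2 ^ n * B"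
  using assms(2)
proof (induction n arbitrary: x)
  case (Suc n)
  then show ?case using abs_slap_le[of "(slap V adj \<sigma> ^^ n) f" "2 ^ n * B" x] by simp
qed (use assms(1) in simp)

lemma summable_heat_series: "summable (\<lambda>n. (slap V adj \<sigma> ^^ n) f x / fact n * t ^ n)"
proof (cases "x \<in> V")
  case True
  define B where "B = Max ((\<lambda>z. \<bar>f z\<bar>) ` V)"
  have B: "\<bar>f z\<bar> \<le> B" if "z \<in> V" for z unfolding B_def using finite_V that by simp
  show ?thesis
  proof (rule summable_comparison_test')
    show "summable (\<lambda>n. B * (inverse (fact n) * (2 * \<bar>t\<bar>) ^ n))"
      by (intro summable_mult summable_exp)
    show "norm ((slap V adj \<sigma> ^^ n) f x / fact n * t ^ n) \<le> B * (inverse (fact n) * (2 * \<bar>t\<bar>) ^ n)"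
      for n
      using mult_right_mono[OF abs_slap_iter_le[of f B x n, OF B True], of "\<bar>t\<bar> ^ n"]
      by (simp add: abs_mult power_abs power_mult_distrib field_simps mult_ac)
  qed
next
  case False
  then have "(slap V adj \<sigma> ^^ Suc n) f x = 0" for n by (simp add: slap_outside)
  then show ?thesis by (subst summable_Suc_iff[symmetric]) simp
qed

lemma heat_0 [simp]: "heat f 0 = f"
  unfolding heat_def
  by (auto simp: powser_zero[of "\<lambda>n. (slap V adj \<sigma> ^^ n) f _ / fact n", simplified])

lemma slap_suminf:
  assumes S: "\<And>y. summable (\<lambda>n. F n y)"
  shows "slap V adj \<sigma> (\<lambda>y. \<Sum>n. F n y) x = (\<Sum>n. slap V adj \<sigma> (F n) x)"
proof -
  have "\<sigma> x y * (\<Sum>n. F n y) - (\<Sum>n. F n x) = (\<Sum>n. \<sigma> x y * F n y - F n x)" for y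
    using suminf_mult[OF S[of y]] suminf_diff[OF summable_mult[OF S[of y]] S[of x]] by simp
  then have "(\<Sum>y\<in>Nb x. \<sigma> x y * (\<Sum>n. F n y) - (\<Sum>n. F n x))
      = (\<Sum>y\<in>Nb x. \<Sum>n. \<sigma> x y * F n y - F n x)" by simp
  also have "\<dots> = (\<Sum>n. \<Sum>y\<in>Nb x. \<sigma> x y * F n y - F n x)"
    by (rule suminf_sum[symmetric]) (intro summable_diff summable_mult S)
  finally have sums: "(\<Sum>y\<in>Nb x. \<sigma> x y * (\<Sum>n. F n y) - (\<Sum>n. F n x))
      = (\<Sum>n. \<Sum>y\<in>Nb x. \<sigma> x y * F n y - F n x)" .
  have "summable (\<lambda>n. \<Sum>y\<in>Nb x. \<sigma> x y * F n y - F n x)"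
    by (intro summable_sum summable_diff summable_mult S)
  from suminf_divide[OF this, of "dg x"] show ?thesis
    unfolding slap_eq sums by simp
qed

lemma heat_has_derivative:
  "((\<lambda>t. heat f t x) has_real_derivative slap V adj \<sigma> (heat f t) x) (at t)"
proof -
  define c where "c n = (slap V adj \<sigma> ^^ n) f x / fact n" for n
  have "((\<lambda>t. \<Sum>n. c n * t ^ n) has_real_derivative (\<Sum>n. diffs c n * t ^ n)) (at t)"
    by (rule termdiffs_strong_converges_everywhere) (use summable_heat_series in \<open>simp add: c_def\<close>)
  moreover have
    "diffs c n * t ^ n = slap V adj \<sigma> (\<lambda>y. (slap V adj \<sigma> ^^ n) f y / fact n * t ^ n) x" for n
  proof -
    have "diffs c n * t ^ n = (t ^ n / fact n) * slap V adj \<sigma> ((slap V adj \<sigma> ^^ n) f) x"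
      unfolding diffs_def c_def by (simp add: field_simps del: of_nat_Suc)
    also have "\<dots> = slap V adj \<sigma> (\<lambda>y. (t ^ n / fact n) * (slap V adj \<sigma> ^^ n) f y) x"
      by (rule slap_scale[symmetric])
    finally show ?thesis by (simp add: field_simps)
  qed
  then have "(\<Sum>n. diffs c n * t ^ n) = slap V adj \<sigma> (heat f t) x"
    unfolding heat_def using slap_suminf[OF summable_heat_series] by simp
  ultimately show ?thesis unfolding heat_def c_def by simp
qed

lemma deg_inner_heat_has_derivative:
  "((\<lambda>t. deg_inner g (heat f t)) has_real_derivative deg_inner g (slap V adj \<sigma> (heat f t))) (at t)"
  unfolding deg_inner_def by (intro DERIV_sum DERIV_cmult heat_has_derivative)

lemma heat_norm_has_derivative:
  "((\<lambda>t. deg_inner (heat f t) (heat f t))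
     has_real_derivative - dirichlet (heat f t) (heat f t)) (at t)"
proof -
  have "((\<lambda>t. deg_inner (heat f t) (heat f t)) has_real_derivative
      (\<Sum>x\<in>V. dg x * slap V adj \<sigma> (heat f t) x * heat f t x
               + slap V adj \<sigma> (heat f t) x * (dg x * heat f t x))) (at t)"
    unfolding deg_inner_def by (intro DERIV_sum DERIV_mult DERIV_cmult heat_has_derivative)
  moreover have "(\<Sum>x\<in>V. dg x * slap V adj \<sigma> (heat f t) x * heat f t x
               + slap V adj \<sigma> (heat f t) x * (dg x * heat f t x))
      = 2 * deg_inner (heat f t) (slap V adj \<sigma> (heat f t))"
    unfolding deg_inner_def by (simp add: sum_distrib_left algebra_simps)
  ultimately show ?thesis unfolding green_formula by simp
qed

lemma heat_decay:
  assumes rayleigh: "\<And>g. 2 * lam * deg_inner g g \<le> dirichlet g g" and "t \<ge> 0"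
  shows "deg_inner (heat f t) (heat f t) \<le> exp (- 2 * lam * t) * deg_inner f f"
proof -
  define E where "E s = exp (2 * lam * s) * deg_inner (heat f s) (heat f s)" for s
  have "E t \<le> E 0"
  proof (rule DERIV_nonpos_imp_nonincreasing[OF \<open>t \<ge> 0\<close>])
    fix s
    have "(E has_real_derivative
        exp (2 * lam * s)
          * (2 * lam * deg_inner (heat f s) (heat f s) - dirichlet (heat f s) (heat f s)))
        (at s)"
      unfolding E_def
      by (rule derivative_eq_intros heat_norm_has_derivative refl | simp add: algebra_simps)+
    moreover have "exp (2 * lam * s) * (2 * lam * deg_inner (heat f s) (heat f s)
        - dirichlet (heat f s) (heat f s)) \<le> 0"
      using rayleigh by (intro mult_nonneg_nonpos) auto
    ultimately show "\<exists>y. (E has_real_derivative y) (at s) \<and> y \<le> 0" by blast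
  qed
  then show ?thesis unfolding E_def by (simp add: exp_minus field_simps)
qed

text \<open>By AM-GM, \<open>2 <f, P\<^sub>t f> \<le> a <f, f> + <P\<^sub>t f, P\<^sub>t f> / a\<close> with \<open>a = exp (- lam * t)\<close>.\<close>

lemma deg_inner_heat_le:
  assumes rayleigh: "\<And>g. 2 * lam * deg_inner g g \<le> dirichlet g g" and t: "t \<ge> 0"
  shows "deg_inner f (heat f t) \<le> exp (- lam * t) * deg_inner f f"
proof -
  define a where "a = exp (- lam * t)"
  have a: "a > 0" "exp (- 2 * lam * t) = a * a"
    unfolding a_def by (simp_all add: exp_add[symmetric])
  have amgm: "2 * (f x * heat f t x) \<le> a * (f x * f x) + (heat f t x * heat f t x) / a" for x
  proof -
    have "0 \<le> (a * f x - heat f t x)\<^sup>2 / a" using a by simp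
    also have "\<dots> = a * (f x * f x) + (heat f t x * heat f t x) / a - 2 * (f x * heat f t x)"
      using a by (simp add: power2_eq_square field_simps)
    finally show ?thesis by simp
  qed
  have "2 * deg_inner f (heat f t) = (\<Sum>x\<in>V. dg x * (2 * (f x * heat f t x)))"
    unfolding deg_inner_def by (simp add: sum_distrib_left algebra_simps)
  also have "\<dots> \<le> (\<Sum>x\<in>V. dg x * (a * (f x * f x) + (heat f t x * heat f t x) / a))"
    by (intro sum_mono mult_left_mono amgm) simp
  also have "\<dots> = a * deg_inner f f + deg_inner (heat f t) (heat f t) / a"
    unfolding deg_inner_def
    by (simp add: sum.distrib sum_distrib_left sum_divide_distrib algebra_simps)
  also have "\<dots> \<le> a * deg_inner f f + (a * a * deg_inner f f) / a"
    using heat_decay[OF rayleigh t] a by (intro add_left_mono divide_right_mono) auto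
  finally show ?thesis unfolding a_def using a by (simp add: mult.commute)
qed

section \<open>Gradient estimate for the heat semigroup and Buser's inequality\<close>

lemma sGamma_heat_has_derivative:
  "((\<lambda>t. sGamma V adj \<sigma> (heat f t) (heat f t) x) has_real_derivative
     2 * sGamma V adj \<sigma> (heat f t) (slap V adj \<sigma> (heat f t)) x) (at t)"
proof -
  define D where "D = slap V adj \<sigma> (heat f t)"
  have "((\<lambda>t. (\<Sum>y\<in>Nb x. (\<sigma> x y * heat f t y - heat f t x) * (\<sigma> x y * heat f t y - heat f t x))
      / (2 * dg x)) has_real_derivative
      (\<Sum>y\<in>Nb x. (\<sigma> x y * D y - D x) * (\<sigma> x y * heat f t y - heat f t x)
          + (\<sigma> x y * D y - D x) * (\<sigma> x y * heat f t y - heat f t x)) / (2 * dg x)) (at t)"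
    unfolding D_def
    by (intro DERIV_cdivide DERIV_sum DERIV_mult DERIV_diff DERIV_cmult heat_has_derivative)
  moreover have "(\<Sum>y\<in>Nb x. (\<sigma> x y * D y - D x) * (\<sigma> x y * heat f t y - heat f t x)
          + (\<sigma> x y * D y - D x) * (\<sigma> x y * heat f t y - heat f t x)) / (2 * dg x)
       = 2 * sGamma V adj \<sigma> (heat f t) D x"
    unfolding sGamma_eq by (simp add: sum_distrib_left algebra_simps)
  ultimately show ?thesis unfolding sGamma_eq[of _ _ x] D_def by simp
qed

definition heat_gradient_functional :: "('a \<Rightarrow> real) \<Rightarrow> real \<Rightarrow> 'a \<Rightarrow> real" where
  "heat_gradient_functional f t x
     = (heat f t x)\<^sup>2 + 2 * t * sGamma V adj \<sigma> (heat f t) (heat f t) x"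

lemma heat_gradient_functional_has_derivative:
  "((\<lambda>t. heat_gradient_functional f t x) has_real_derivative
     lap V adj (heat_gradient_functional f t) x
       - 4 * t * sGamma2 V adj \<sigma> (heat f t) (heat f t) x) (at t)"
proof -
  let ?u = "heat f t"
  have "((\<lambda>t. heat_gradient_functional f t x) has_real_derivative
      2 * ?u x * slap V adj \<sigma> ?u x + 2 * sGamma V adj \<sigma> ?u ?u x
      + 2 * t * (2 * sGamma V adj \<sigma> ?u (slap V adj \<sigma> ?u) x)) (at t)"
    unfolding heat_gradient_functional_def
    by (rule derivative_eq_intros heat_has_derivative sGamma_heat_has_derivative refl
        | simp add: algebra_simps)+
  moreover have "lap V adj (heat_gradient_functional f t) x
      = 2 * sGamma V adj \<sigma> ?u ?u x + 2 * ?u x * slap V adj \<sigma> ?u x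
        + 2 * t * (2 * sGamma2 V adj \<sigma> ?u ?u x + 2 * sGamma V adj \<sigma> ?u (slap V adj \<sigma> ?u) x)"
    unfolding heat_gradient_functional_def power2_eq_square lap_add_scaled lap_square lap_sGamma ..
  ultimately show ?thesis by (simp add: algebra_simps)
qed

text \<open>Under \<open>CD(0, \<infinity>)\<close> the functional is a subsolution of the heat equation, so by the
  maximum principle it stays below its initial maximum \<open>B\<^sup>2\<close>; perturbing by \<open>- e * t\<close>
  makes the time derivative at a maximum point strictly negative.\<close>

lemma heat_gradient_functional_le:
  assumes CD: "CD V adj \<sigma> 0 \<infinity>" and B: "\<And>z. z \<in> V \<Longrightarrow> \<bar>f z\<bar> \<le> B"
    and x: "x \<in> V" and t: "t \<ge> 0"
  shows "heat_gradient_functional f t x \<le> B\<^sup>2"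
proof -
  have perturbed: "heat_gradient_functional f t x - e * t \<le> B\<^sup>2" if e: "e > 0" for e
  proof (rule finite_family_max_principle[OF finite_V V_ne,
        where h = "\<lambda>x t. heat_gradient_functional f t x - e * t"])
    show "((\<lambda>t. heat_gradient_functional f t y - e * t) has_real_derivative
        lap V adj (heat_gradient_functional f s) y
          - 4 * s * sGamma2 V adj \<sigma> (heat f s) (heat f s) y - e)
        (at s)" for y s
      by (rule derivative_eq_intros heat_gradient_functional_has_derivative refl | simp)+
    show "lap V adj (heat_gradient_functional f s) y
        - 4 * s * sGamma2 V adj \<sigma> (heat f s) (heat f s) y - e < 0"
      if "y \<in> V" "s > 0"
        "\<forall>z\<in>V. heat_gradient_functional f s z - e * s \<le> heat_gradient_functional f s y - e * s"
      for y s
    proof -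
      have "lap V adj (heat_gradient_functional f s) y \<le> 0"
        using lap_nonpos_at_max[of y "heat_gradient_functional f s"] that by simp
      moreover have "0 \<le> 4 * s * sGamma2 V adj \<sigma> (heat f s) (heat f s) y"
        using sGamma2_nonneg[OF CD that(1)] that(2) by simp
      ultimately show ?thesis using e by linarith
    qed
    show "heat_gradient_functional f 0 y - e * 0 \<le> B\<^sup>2" if "y \<in> V" for y
      using B[OF that] by (simp add: heat_gradient_functional_def abs_le_square_iff[symmetric])
  qed (use x t in auto)
  show ?thesis
  proof (rule field_le_epsilon)
    fix e :: real assume "e > 0"
    then have "heat_gradient_functional f t x - e * t / (t + 1) \<le> B\<^sup>2"
      using perturbed[of "e / (t + 1)"] t by simp
    moreover have "e * t / (t + 1) \<le> e"
      using t \<open>e > 0\<close> by (simp add: pos_divide_le_eq algebra_simps)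
    ultimately show "heat_gradient_functional f t x \<le> B\<^sup>2 + e" by linarith
  qed
qed

lemma heat_gradient_bound:
  assumes CD: "CD V adj \<sigma> 0 \<infinity>" and B: "\<And>z. z \<in> V \<Longrightarrow> \<bar>f z\<bar> \<le> B"
    and x: "x \<in> V" and y: "y \<in> Nb x" and t: "t > 0"
  shows "\<bar>heat f t x - \<sigma> x y * heat f t y\<bar> \<le> B * sqrt (real (max_deg V adj) / t)"
proof -
  let ?u = "heat f t"
  have "2 * t * sGamma V adj \<sigma> ?u ?u x \<le> B\<^sup>2"
    using heat_gradient_functional_le[of f B x t, OF CD B x] t zero_le_power2[of "?u x"]
    unfolding heat_gradient_functional_def by linarith
  then have "dg x * (2 * t * sGamma V adj \<sigma> ?u ?u x) / t \<le> dg x * B\<^sup>2 / t"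
    using t by (intro divide_right_mono mult_left_mono) auto
  then have \<Gamma>: "2 * dg x * sGamma V adj \<sigma> ?u ?u x \<le> dg x * B\<^sup>2 / t"
    using t by simp
  have "(?u x - \<sigma> x y * ?u y)\<^sup>2 \<le> (\<Sum>y\<in>Nb x. (?u x - \<sigma> x y * ?u y)\<^sup>2)"
    by (rule member_le_sum[OF y _ finite_nbrs]) simp
  also have "\<dots> \<le> dg x * B\<^sup>2 / t" unfolding sum_nbrs_sq_eq_sGamma by (rule \<Gamma>)
  also have "\<dots> \<le> B\<^sup>2 * (real (max_deg V adj) / t)"
    using deg_le_max_deg[OF x] t by (simp add: field_simps mult_right_mono)
  finally have "\<bar>?u x - \<sigma> x y * ?u y\<bar> \<le> sqrt (B\<^sup>2 * (real (max_deg V adj) / t))"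
    by (intro real_le_rsqrt) simp
  also have "\<dots> = B * sqrt (real (max_deg V adj) / t)"
    using B[OF x] by (simp only: real_sqrt_mult real_sqrt_abs)
  finally show ?thesis .
qed

lemma neg_deg_inner_slap_heat_le:
  assumes CD: "CD V adj \<sigma> 0 \<infinity>" and B: "\<And>z. z \<in> V \<Longrightarrow> \<bar>f z\<bar> \<le> B" and t: "t > 0"
  shows "- deg_inner f (slap V adj \<sigma> (heat f t))
    \<le> B * edge_variation f * sqrt (real (max_deg V adj) / t)"
proof -
  define c where "c = B * sqrt (real (max_deg V adj) / t)"
  have "dirichlet (heat f t) f \<le> (\<Sum>x\<in>V. \<Sum>y\<in>Nb x. c * \<bar>f x - \<sigma> x y * f y\<bar>)"
    unfolding dirichlet_def
  proof (intro sum_mono)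
    fix x y assume "x \<in> V" "y \<in> Nb x"
    have "(heat f t x - \<sigma> x y * heat f t y) * (f x - \<sigma> x y * f y)
        \<le> \<bar>heat f t x - \<sigma> x y * heat f t y\<bar> * \<bar>f x - \<sigma> x y * f y\<bar>"
      by (metis abs_ge_self abs_mult)
    also have "\<dots> \<le> c * \<bar>f x - \<sigma> x y * f y\<bar>"
      unfolding c_def
      by (intro mult_right_mono heat_gradient_bound[of f B, OF CD B] \<open>x \<in> V\<close> \<open>y \<in> Nb x\<close> t)
        simp_all
    finally show "(heat f t x - \<sigma> x y * heat f t y) * (f x - \<sigma> x y * f y)
        \<le> c * \<bar>f x - \<sigma> x y * f y\<bar>" .
  qed
  then show ?thesis
    unfolding green_formula edge_variation_def c_def by (simp add: sum_distrib_left algebra_simps)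
qed

lemma buser_inequality:
  assumes CD: "CD V adj \<sigma> 0 \<infinity>" and B: "\<And>z. z \<in> V \<Longrightarrow> \<bar>f z\<bar> \<le> B" and t: "t \<ge> 0"
  shows "deg_inner f f - deg_inner f (heat f t)
    \<le> 2 * B * edge_variation f * sqrt (real (max_deg V adj)) * sqrt t"
proof -
  define C where "C = B * edge_variation f * sqrt (real (max_deg V adj))"
  define F where "F s = deg_inner f f - deg_inner f (heat f s) - 2 * C * sqrt s" for s
  have "F t \<le> F 0"
  proof (rule DERIV_nonpos_imp_decreasing_open[OF t])
    fix s :: real assume "0 < s"
    have deriv: "(F has_real_derivative
        0 - deg_inner f (slap V adj \<sigma> (heat f s)) - 2 * C * (inverse (sqrt s) / 2)) (at s)"
      unfolding F_def
      by (rule DERIV_diff[OF DERIV_diff[OF DERIV_const deg_inner_heat_has_derivative]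
          DERIV_cmult[OF DERIV_real_sqrt[OF \<open>0 < s\<close>]]])
    have "- deg_inner f (slap V adj \<sigma> (heat f s))
        \<le> B * edge_variation f * sqrt (real (max_deg V adj) / s)"
      using neg_deg_inner_slap_heat_le[of f B, OF CD B \<open>0 < s\<close>] .
    also have "\<dots> = 2 * C * (inverse (sqrt s) / 2)"
      unfolding C_def divide_inverse real_sqrt_mult real_sqrt_inverse by simp
    finally have "0 - deg_inner f (slap V adj \<sigma> (heat f s)) - 2 * C * (inverse (sqrt s) / 2) \<le> 0"
      by simp
    with deriv show "\<exists>y. (F has_real_derivative y) (at s) \<and> y \<le> 0" by blast
  next
    have "continuous_on {0..t} (\<lambda>s. deg_inner f (heat f s))"
      using deg_inner_heat_has_derivative
      by (intro continuous_at_imp_continuous_on ballI DERIV_isCont) blast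
    then show "continuous_on {0..t} F"
      unfolding F_def
      by (intro continuous_on_diff continuous_on_const continuous_on_mult continuous_on_real_sqrt
          continuous_on_id)
  qed
  then show ?thesis unfolding F_def C_def by simp
qed

section \<open>The volume bound\<close>

lemma frustration_attained:
  obtains \<tau> where "\<And>z. z \<in> V \<Longrightarrow> \<bar>\<tau> z\<bar> \<le> 1" "deg_inner \<tau> \<tau> = real (vol V adj)"
    "edge_variation \<tau> = frustration V adj \<sigma>"
proof -
  have "finite (V \<rightarrow>\<^sub>E {-1, 1::real})" by (intro finite_PiE finite_V) simp
  moreover have "V \<rightarrow>\<^sub>E {-1, 1::real} \<noteq> {}"
    by (simp add: PiE_eq_empty_iff)
  ultimately have "frustration V adj \<sigma> \<in> edge_variation ` (V \<rightarrow>\<^sub>E {-1, 1})"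
    unfolding frustration_def edge_variation_def[abs_def] by (intro Min_in) auto
  then obtain \<tau> where \<tau>: "\<tau> \<in> V \<rightarrow>\<^sub>E {-1, 1}" "edge_variation \<tau> = frustration V adj \<sigma>" by auto
  then have "\<tau> z = 1 \<or> \<tau> z = -1" if "z \<in> V" for z using that by auto
  then have bound: "\<And>z. z \<in> V \<Longrightarrow> \<bar>\<tau> z\<bar> \<le> 1" and "\<And>z. z \<in> V \<Longrightarrow> \<tau> z * \<tau> z = 1"
    by fastforce+
  then have "deg_inner \<tau> \<tau> = real (vol V adj)"
    unfolding deg_inner_def vol_def of_nat_sum by (intro sum.cong) (simp_all add: mult.assoc)
  from bound this \<tau>(2) show ?thesis by (rule that)
qed

text \<open>At time \<open>t = ln 2 / lam\<close> the spectral decay gives \<open><f, P\<^sub>t f> \<le> <f, f> / 2\<close>, and Buser's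
  inequality bounds the remaining half.\<close>

lemma deg_inner_le_edge_variation:
  assumes CD: "CD V adj \<sigma> 0 \<infinity>" and lam: "lam > 0"
    and rayleigh: "\<And>g. 2 * lam * deg_inner g g \<le> dirichlet g g"
    and f: "\<And>z. z \<in> V \<Longrightarrow> \<bar>f z\<bar> \<le> 1"
  shows "deg_inner f f \<le> 4 * edge_variation f * sqrt (real (max_deg V adj) * ln 2 / lam)"
proof -
  define t where "t = ln 2 / lam"
  have t: "t \<ge> 0" "exp (- lam * t) = 1 / 2"
    unfolding t_def using lam by (simp_all add: exp_minus)
  have "deg_inner f (heat f t) \<le> deg_inner f f / 2"
    using deg_inner_heat_le[OF rayleigh t(1), of f] unfolding t(2) by simp
  moreover have "deg_inner f f - deg_inner f (heat f t)
      \<le> 2 * 1 * edge_variation f * sqrt (real (max_deg V adj)) * sqrt t"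
    by (rule buser_inequality[of f 1, OF CD f t(1)])
  ultimately have "deg_inner f f \<le> 4 * edge_variation f * (sqrt (real (max_deg V adj)) * sqrt t)"
    by linarith
  then show ?thesis unfolding t_def by (simp add: real_sqrt_mult real_sqrt_divide)
qed

end

theorem theorem3p12:
  fixes V :: "'a set" and adj :: "'a \<Rightarrow> 'a \<Rightarrow> bool" and \<sigma> :: "'a \<Rightarrow> 'a \<Rightarrow> real" and N :: ereal
  assumes "signed_graph V adj \<sigma>"
    and "connected_graph V adj"
    and "\<not> balanced V adj \<sigma>"
    and "N > 1"
    and "CD V adj \<sigma> 0 N"
  shows "real (vol V adj) \<le> 8 * sqrt ((1 + sqrtN N) * ln 2) * real (max_deg V adj)
           * frustration V adj \<sigma>
           * sqrt (real (diam V adj + 1) * real_of_int \<lceil>real (diam V adj + 1) / 2\<rceil>)"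
proof -
  interpret unbalanced_sgraph V adj \<sigma> using assms(1-3) by unfold_locales
  define d where "d = real (max_deg V adj)"
  define R where "R = walk_factor (diam V adj + 1)"
  obtain lam where lam: "lam > 0" "\<And>g. 2 * lam * deg_inner g g \<le> dirichlet g g"
    and gap: "1 \<le> 4 * (1 + sqrtN N) * d * lam * R"
    unfolding d_def R_def using eigenvalue_lower_bound[OF assms(5,4)] by blast
  obtain \<tau> where \<tau>: "\<And>z. z \<in> V \<Longrightarrow> \<bar>\<tau> z\<bar> \<le> 1" "deg_inner \<tau> \<tau> = real (vol V adj)"
    "edge_variation \<tau> = frustration V adj \<sigma>"
    using frustration_attained by blast
  have CD: "CD V adj \<sigma> 0 \<infinity>"
    using CD_zero_infinity[OF assms(5) sqrtN_facts(1)[OF assms(4)]] .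
  have "real (vol V adj) \<le> 4 * frustration V adj \<sigma> * sqrt (d * ln 2 / lam)"
    using deg_inner_le_edge_variation[where f=\<tau>, OF CD lam \<tau>(1)] \<tau>(2,3) unfolding d_def by simp
  also have "\<dots> \<le> 4 * frustration V adj \<sigma> * (2 * d * sqrt ((1 + sqrtN N) * ln 2) * sqrt R)"
    using sqrt_ln2_div_le[OF lam(1) _ _ _ gap] sqrtN_facts(2)[OF assms(4)] walk_factor_nonneg
      edge_variation_nonneg[of \<tau>] \<tau>(3) unfolding d_def R_def by (intro mult_left_mono) auto
  finally show ?thesis unfolding d_def R_def walk_factor_def by (simp add: algebra_simps)
qed

end
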